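(* If $G$ is a $(3,2)$-critical graph that contains at least three odd cycles, then every two distinct odd cycles of $G$ have more than one common vertex.
   Context: All graphs are finite and simple. An odd cycle is a cycle (subgraph) of odd length. For a graph $G$, ${\rm es}_{\chi}(G)$ is the minimum number of edges of $G$ whose removal results in a spanning subgraph $G_1$ with $\chi(G_1)=\chi(G)-1$. $G$ is edge-stability critical if ${\rm es}_{\chi}(G-e)<{\rm es}_{\chi}(G)$ for every edge $e$. $G$ is $(3,2)$-critical if it is edge-stability critical with $\chi(G)=3$ and ${\rm es}_{\chi}(G)=2$. *)

theory Defs
  imports Main
begin

definition simple_graph :: "'a set \<Rightarrow> 'a set set \<Rightarrow> bool" where
  "simple_graph V E \<longleftrightarrow> finite V \<and>
     (\<forall>e\<in>E. \<exists>u v. e = {u, v} \<and> u \<noteq> v \<and> u \<in> V \<and> v \<in> V)"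

definition colorable :: "'a set \<Rightarrow> 'a set set \<Rightarrow> nat \<Rightarrow> bool" where
  "colorable V E k \<longleftrightarrow> (\<exists>f :: 'a \<Rightarrow> nat. (\<forall>v\<in>V. f v < k) \<and>
     (\<forall>u v. {u, v} \<in> E \<longrightarrow> f u \<noteq> f v))"

definition chromatic_number :: "'a set \<Rightarrow> 'a set set \<Rightarrow> nat" where
  "chromatic_number V E = (LEAST k. colorable V E k)"

definition es_chi :: "'a set \<Rightarrow> 'a set set \<Rightarrow> nat" where
  "es_chi V E = (LEAST n. \<exists>F. F \<subseteq> E \<and> card F = n \<and>
      chromatic_number V (E - F) = chromatic_number V E - 1)"

definition edge_stability_critical :: "'a set \<Rightarrow> 'a set set \<Rightarrow> bool" where
  "edge_stability_critical V E \<longleftrightarrow> (\<forall>e\<in>E. es_chi V (E - {e}) < es_chi V E)"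

definition crit_3_2 :: "'a set \<Rightarrow> 'a set set \<Rightarrow> bool" where
  "crit_3_2 V E \<longleftrightarrow> edge_stability_critical V E \<and> chromatic_number V E = 3 \<and> es_chi V E = 2"

definition cycle_edges :: "'a list \<Rightarrow> 'a set set" where
  "cycle_edges vs = {{vs ! i, vs ! ((i + 1) mod length vs)} | i. i < length vs}"

definition is_cycle :: "'a set \<Rightarrow> 'a set set \<Rightarrow> 'a list \<Rightarrow> bool" where
  "is_cycle V E vs \<longleftrightarrow> length vs \<ge> 3 \<and> distinct vs \<and> set vs \<subseteq> V \<and> cycle_edges vs \<subseteq> E"

definition odd_cycles :: "'a set \<Rightarrow> 'a set set \<Rightarrow> ('a set \<times> 'a set set) set" where
  "odd_cycles V E = {(set vs, cycle_edges vs) | vs. is_cycle V E vs \<and> odd (length vs)}"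

end

theory Submission
  imports Defs
begin

text \<open>
  Deleting an edge e from a (3,2)-critical graph lowers es_chi below 2, so after deleting e
  one further edge f suffices to make the graph bipartite; hence every odd cycle contains e or f.
  If two odd cycles C1, C2 shared at most one vertex they would be edge-disjoint, so every edge e
  would lie on C1 or on C2. A third odd cycle then runs inside C1 \<union> C2; as C1 and C2 meet in at
  most one vertex it can never pass from one to the other, so it lies inside one of them, and a
  cycle contained in a cycle is that cycle.
\<close>

(* Needed as a rewrite rule: for n = length xs the simplifier turns 0 < n into xs \<noteq> [] and gets stuck. *)
lemma Suc_mod_less [simp]: "i < n \<Longrightarrow> Suc i mod n < (n::nat)"
  by simp

lemma ex_Suc_mod_eq:
  fixes n :: nat
  assumes "i < n"
  obtains p where "p < n" "Suc p mod n = i"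
proof (cases i)
  case 0
  then show ?thesis using assms that[of "n - 1"] by simp
next
  case (Suc p)
  then show ?thesis using assms that[of p] by simp
qed

lemma Suc_mod_neq: "2 \<le> n \<Longrightarrow> i < n \<Longrightarrow> Suc i mod n \<noteq> (i::nat)"
  by (cases "Suc i < n") (auto simp: mod_if)

lemma Suc_Suc_mod_neq: "3 \<le> n \<Longrightarrow> i < n \<Longrightarrow> Suc (Suc i) mod n \<noteq> (i::nat)"
  by (cases "Suc (Suc i) < n"; cases "Suc i < n") (auto simp: mod_if)

lemma Suc_mod_inj:
  fixes n :: nat
  assumes "i < n" "j < n" "Suc i mod n = Suc j mod n"
  shows "i = j"
  using assms by (auto simp: mod_if split: if_splits)

lemma ex_cyclic_change:
  fixes n :: nat
  assumes "i < n" "Q i" "j < n" "\<not> Q j"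
  shows "\<exists>k<n. Q k \<and> \<not> Q (Suc k mod n)"
proof (rule ccontr)
  assume "\<not> ?thesis"
  then have step: "k < n \<Longrightarrow> Q k \<Longrightarrow> Q (Suc k mod n)" for k by blast
  have "Q ((i + m) mod n)" for m
  proof (induction m)
    case 0
    then show ?case using assms(1,2) by simp
  next
    case (Suc m)
    have "(i + Suc m) mod n = Suc ((i + m) mod n) mod n" by (simp add: mod_Suc_eq)
    then show ?case using step[OF _ Suc.IH] assms(1) by simp
  qed
  moreover have "(i + (j + n - i)) mod n = j" using assms(1,3) by simp
  ultimately show False using assms(4) by metis
qed

definition cycle_edge :: "'a list \<Rightarrow> nat \<Rightarrow> 'a set" where
  "cycle_edge vs i = {vs ! i, vs ! (Suc i mod length vs)}"

lemma cycle_edges_eq_image: "cycle_edges vs = cycle_edge vs ` {..<length vs}"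
  by (auto simp: cycle_edges_def cycle_edge_def)

lemma mem_cycle_edge_iff:
  assumes "distinct vs" "i < length vs" "j < length vs"
  shows "vs ! i \<in> cycle_edge vs j \<longleftrightarrow> i = j \<or> i = Suc j mod length vs"
  using assms by (auto simp: cycle_edge_def nth_eq_iff_index_eq)

lemma cycle_edge_subset: "i < length vs \<Longrightarrow> cycle_edge vs i \<subseteq> set vs"
  by (auto simp: cycle_edge_def intro!: nth_mem)

lemma card_cycle_edge:
  assumes "distinct vs" "2 \<le> length vs" "i < length vs"
  shows "card (cycle_edge vs i) = 2"
  using assms by (auto simp: cycle_edge_def nth_eq_iff_index_eq mod_if)

lemma cycle_edge_in_cycle_edges: "i < length vs \<Longrightarrow> cycle_edge vs i \<in> cycle_edges vs"
  by (simp add: cycle_edges_eq_image)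

lemma Union_cycle_edges: "\<Union> (cycle_edges vs) = set vs"
  by (auto simp: cycle_edges_eq_image cycle_edge_def in_set_conv_nth intro!: nth_mem)

lemma inj_on_cycle_edge:
  assumes "distinct vs" "3 \<le> length vs"
  shows "inj_on (cycle_edge vs) {..<length vs}"
proof
  fix i j assume i: "i \<in> {..<length vs}" and j: "j \<in> {..<length vs}"
    and eq: "cycle_edge vs i = cycle_edge vs j"
  let ?n = "length vs"
  show "i = j"
  proof (rule ccontr)
    assume "i \<noteq> j"
    moreover have "vs ! i \<in> cycle_edge vs j" "vs ! j \<in> cycle_edge vs i"
      using eq by (auto simp: cycle_edge_def)
    ultimately have "i = Suc j mod ?n" "j = Suc i mod ?n"
      using mem_cycle_edge_iff[OF assms(1)] i j by auto
    then show False using Suc_Suc_mod_neq[OF assms(2)] i by (metis lessThan_iff mod_Suc_eq)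
  qed
qed

lemma cycle_edges_at_vertex:
  assumes "distinct vs" "p < length vs" "Suc p mod length vs = i"
  shows "{e \<in> cycle_edges vs. vs ! i \<in> e} = cycle_edge vs ` {p, i}"
proof -
  let ?n = "length vs"
  have i: "i < ?n" using assms(2,3) by auto
  have "vs ! i \<in> cycle_edge vs j \<longleftrightarrow> j = p \<or> j = i" if "j < ?n" for j
    using mem_cycle_edge_iff[OF assms(1) i that] Suc_mod_inj[OF that assms(2)] assms(3) by metis
  then have "{j \<in> {..<?n}. vs ! i \<in> cycle_edge vs j} = {p, i}"
    using i assms(2) by auto
  then show ?thesis unfolding cycle_edges_eq_image by blast
qed

lemma card_cycle_edges_at_vertex:
  assumes "distinct vs" "3 \<le> length vs" "x \<in> set vs"
  shows "card {e \<in> cycle_edges vs. x \<in> e} = 2"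
proof -
  let ?n = "length vs"
  obtain i where i: "i < ?n" "x = vs ! i" using assms(3) by (auto simp: in_set_conv_nth)
  obtain p where p: "p < ?n" "Suc p mod ?n = i" using ex_Suc_mod_eq[OF i(1)] .
  have "p \<noteq> i" using Suc_mod_neq[of ?n p] assms(2) p by auto
  then have "cycle_edge vs p \<noteq> cycle_edge vs i"
    using inj_on_cycle_edge[OF assms(1,2)] i(1) p(1) by (auto dest: inj_onD)
  then show ?thesis using cycle_edges_at_vertex[OF assms(1) p] i(2) by simp
qed

lemma cycle_edges_subset_imp_eq:
  assumes "distinct vs" "3 \<le> length vs" "distinct ws" "3 \<le> length ws"
    and sub: "cycle_edges ws \<subseteq> cycle_edges vs"
  shows "cycle_edges ws = cycle_edges vs"
proof (rule ccontr)
  let ?n = "length vs" and ?W = "cycle_edges ws"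
  assume "?W \<noteq> cycle_edges vs"
  then obtain j where j: "j < ?n" "cycle_edge vs j \<notin> ?W"
    using sub unfolding cycle_edges_eq_image[of vs] by blast
  have "cycle_edge ws 0 \<in> ?W" by (rule cycle_edge_in_cycle_edges) (use assms(4) in linarith)
  then obtain i0 where i0: "i0 < ?n" "cycle_edge vs i0 \<in> ?W"
    using sub unfolding cycle_edges_eq_image[of vs] by (metis imageE lessThan_iff subsetD)
  obtain i where i: "i < ?n" "cycle_edge vs i \<in> ?W" "cycle_edge vs (Suc i mod ?n) \<notin> ?W"
    using ex_cyclic_change[of i0 ?n "\<lambda>k. cycle_edge vs k \<in> ?W", OF i0 j] by blast
  \<comment> \<open>x is where vs leaves ws; having degree 2 in both cycles, it has the same edges in both.\<close>
  define x where "x = vs ! (Suc i mod ?n)"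
  have x: "x \<in> cycle_edge vs i" "x \<in> cycle_edge vs (Suc i mod ?n)"
    by (simp_all add: x_def cycle_edge_def)
  have "x \<in> set ws" using x(1) i(2) Union_cycle_edges[of ws] by blast
  have "x \<in> set vs" using x(1) i(1) cycle_edge_subset by blast
  have "{e \<in> ?W. x \<in> e} = {e \<in> cycle_edges vs. x \<in> e}"
  proof (rule card_subset_eq)
    show "finite {e \<in> cycle_edges vs. x \<in> e}" by (simp add: cycle_edges_eq_image)
    show "{e \<in> ?W. x \<in> e} \<subseteq> {e \<in> cycle_edges vs. x \<in> e}" using sub by blast
    show "card {e \<in> ?W. x \<in> e} = card {e \<in> cycle_edges vs. x \<in> e}"
      using card_cycle_edges_at_vertex assms(1-4) \<open>x \<in> set ws\<close> \<open>x \<in> set vs\<close> by metis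
  qed
  moreover have "cycle_edge vs (Suc i mod ?n) \<in> cycle_edges vs"
    using i(1) by (simp add: cycle_edge_in_cycle_edges)
  ultimately show False using i(3) x(2) by blast
qed

lemma cycle_edges_subset_Un_cases:
  assumes "distinct vs" and cover: "cycle_edges vs \<subseteq> E1 \<union> E2"
    and "finite (\<Union> E1)" "card (\<Union> E1 \<inter> \<Union> E2) \<le> 1"
  shows "cycle_edges vs \<subseteq> E1 \<or> cycle_edges vs \<subseteq> E2"
proof (rule ccontr)
  let ?n = "length vs"
  let ?Q = "\<lambda>k. cycle_edge vs k \<in> E1"
  assume "\<not> ?thesis"
  then obtain i0 j0 where ij0: "i0 < ?n" "?Q i0" "j0 < ?n" "\<not> ?Q j0"
    using cover unfolding cycle_edges_eq_image by blast
  obtain i where i: "i < ?n" "?Q i" "\<not> ?Q (Suc i mod ?n)"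
    using ex_cyclic_change[of i0 ?n ?Q] ij0 by blast
  obtain j where j: "j < ?n" "\<not> ?Q j" "?Q (Suc j mod ?n)"
    using ex_cyclic_change[of j0 ?n "\<lambda>k. \<not> ?Q k"] ij0 by blast
  have "cycle_edge vs (Suc i mod ?n) \<in> E2" "cycle_edge vs j \<in> E2"
    using i j cover cycle_edge_in_cycle_edges Suc_mod_less by blast+
  then have "{vs ! (Suc i mod ?n), vs ! (Suc j mod ?n)} \<subseteq> \<Union> E1 \<inter> \<Union> E2"
    using i(2) j(3) by (auto simp: cycle_edge_def)
  moreover have "vs ! (Suc i mod ?n) \<noteq> vs ! (Suc j mod ?n)"
    using i j Suc_mod_inj[OF i(1) j(1)] assms(1) by (auto simp: nth_eq_iff_index_eq)
  ultimately have "2 \<le> card (\<Union> E1 \<inter> \<Union> E2)"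
    using assms(3) by (metis card_2_iff card_mono finite_Int)
  then show False using assms(4) by simp
qed

lemma cycle_edges_disjoint:
  assumes "distinct vs" "2 \<le> length vs" "card (set vs \<inter> set ws) \<le> 1"
  shows "cycle_edges vs \<inter> cycle_edges ws = {}"
proof (rule ccontr)
  assume "cycle_edges vs \<inter> cycle_edges ws \<noteq> {}"
  then obtain i where i: "i < length vs" "cycle_edge vs i \<in> cycle_edges ws"
    unfolding cycle_edges_eq_image[of vs] by blast
  then have "cycle_edge vs i \<subseteq> set vs \<inter> set ws"
    using cycle_edge_subset Union_cycle_edges[of ws] by blast
  then have "card (cycle_edge vs i) \<le> card (set vs \<inter> set ws)"
    by (intro card_mono) simp_all
  then show False using card_cycle_edge[OF assms(1,2) i(1)] assms(3) by simp
qed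

lemma simple_graph_subset: "simple_graph V E \<Longrightarrow> H \<subseteq> E \<Longrightarrow> simple_graph V H"
  unfolding simple_graph_def by blast

lemma simple_graph_finite_edges:
  assumes "simple_graph V E"
  shows "finite E"
proof -
  have "E \<subseteq> Pow V" "finite V" using assms by (auto simp: simple_graph_def)
  then show ?thesis by (meson finite_Pow_iff finite_subset)
qed

lemma colorable_antimono: "colorable V H k \<Longrightarrow> H' \<subseteq> H \<Longrightarrow> colorable V H' k"
  unfolding colorable_def by blast

lemma colorable_mono: "colorable V H k \<Longrightarrow> k \<le> l \<Longrightarrow> colorable V H l"
  unfolding colorable_def by (meson order_less_le_trans)

lemma colorable_no_edges: "0 < k \<Longrightarrow> colorable V {} k"
  unfolding colorable_def by auto

lemma colorable_card:
  assumes "simple_graph V H"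
  shows "colorable V H (card V)"
proof -
  obtain h where h: "bij_betw h V {0..<card V}"
    using assms ex_bij_betw_finite_nat by (auto simp: simple_graph_def)
  have "h u \<noteq> h v" if "{u, v} \<in> H" for u v
  proof -
    obtain a b where "{u, v} = {a, b}" "a \<noteq> b" "a \<in> V" "b \<in> V"
      using assms \<open>{u, v} \<in> H\<close> by (auto simp: simple_graph_def)
    then have "u \<noteq> v" "u \<in> V" "v \<in> V" by (auto simp: doubleton_eq_iff)
    then show ?thesis using h by (auto simp: bij_betw_def inj_on_def)
  qed
  moreover have "\<forall>v\<in>V. h v < card V" using h by (auto simp: bij_betw_def)
  ultimately show ?thesis unfolding colorable_def by blast
qed

lemma chromatic_number_le_iff:
  assumes "simple_graph V H"
  shows "chromatic_number V H \<le> k \<longleftrightarrow> colorable V H k"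
proof
  have "colorable V H (chromatic_number V H)"
    unfolding chromatic_number_def by (rule LeastI[of "colorable V H", OF colorable_card[OF assms]])
  then show "chromatic_number V H \<le> k \<Longrightarrow> colorable V H k" by (rule colorable_mono)
qed (simp add: chromatic_number_def Least_le)

lemma chromatic_number_mono:
  assumes "simple_graph V H" "H' \<subseteq> H"
  shows "chromatic_number V H' \<le> chromatic_number V H"
proof -
  have "colorable V H (chromatic_number V H)"
    using chromatic_number_le_iff[OF assms(1), of "chromatic_number V H"] by simp
  then have "colorable V H' (chromatic_number V H)" using assms(2) by (rule colorable_antimono)
  then show ?thesis using chromatic_number_le_iff[OF simple_graph_subset[OF assms]] by simp
qed

lemma chromatic_number_single_edge:
  assumes "finite V" "u \<in> V" "v \<in> V" "u \<noteq> v"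
  shows "chromatic_number V {{u, v}} = 2"
proof -
  have G: "simple_graph V {{u, v}}" using assms by (auto simp: simple_graph_def)
  have "colorable V {{u, v}} 2"
    unfolding colorable_def
    by (rule exI[of _ "\<lambda>x. if x = u then 0 else 1"]) (use assms in \<open>auto simp: doubleton_eq_iff\<close>)
  moreover have "\<not> colorable V {{u, v}} 1"
  proof
    assume "colorable V {{u, v}} 1"
    then obtain f :: "'a \<Rightarrow> nat" where "f u < 1" "f v < 1" "f u \<noteq> f v"
      using assms(2,3) unfolding colorable_def by blast
    then show False by simp
  qed
  ultimately show ?thesis
    using chromatic_number_le_iff[OF G, of 2] chromatic_number_le_iff[OF G, of 1] by linarith
qed

lemma odd_cycle_not_2_colorable:
  assumes "odd (length vs)" "set vs \<subseteq> V" "cycle_edges vs \<subseteq> H"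
  shows "\<not> colorable V H 2"
proof
  let ?n = "length vs"
  assume "colorable V H 2"
  then obtain f :: "'a \<Rightarrow> nat"
    where f: "\<forall>v\<in>V. f v < 2" "\<forall>u v. {u, v} \<in> H \<longrightarrow> f u \<noteq> f v"
    by (auto simp: colorable_def)
  have bit: "f (vs ! i) < 2" if "i < ?n" for i using f(1) assms(2) nth_mem[OF that] by blast
  have flip: "f (vs ! i) \<noteq> f (vs ! (Suc i mod ?n))" if "i < ?n" for i
    using f(2) assms(3) cycle_edge_in_cycle_edges[OF that] by (auto simp: cycle_edge_def)
  have alternate: "f (vs ! i) = (f (vs ! 0) + i) mod 2" if "i < ?n" for i
    using that
  proof (induction i)
    case 0
    then show ?case using bit by simp
  next
    case (Suc i)
    have "f (vs ! i) \<noteq> f (vs ! Suc i)" using flip[of i] Suc.prems by simp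
    moreover have "f (vs ! i) = (f (vs ! 0) + i) mod 2" "f (vs ! i) < 2" "f (vs ! Suc i) < 2"
      using Suc bit by simp_all
    ultimately show ?case by presburger
  qed
  have "0 < ?n" using assms(1) by presburger
  then have "f (vs ! (?n - 1)) \<noteq> f (vs ! 0)" using flip[of "?n - 1"] by simp
  moreover have "f (vs ! (?n - 1)) = (f (vs ! 0) + (?n - 1)) mod 2"
    by (rule alternate) (use \<open>0 < ?n\<close> in linarith)
  moreover have "(f (vs ! 0) + (?n - 1)) mod 2 = f (vs ! 0)"
    using bit[of 0] \<open>0 < ?n\<close> assms(1) by (auto elim!: oddE)
  ultimately show False by simp
qed

lemma es_chi_attained:
  assumes "F0 \<subseteq> E" "chromatic_number V (E - F0) = chromatic_number V E - 1"
  obtains F where "F \<subseteq> E" "card F = es_chi V E"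
    "chromatic_number V (E - F) = chromatic_number V E - 1"
proof -
  have "\<exists>F. F \<subseteq> E \<and> card F = card F0 \<and> chromatic_number V (E - F) = chromatic_number V E - 1"
    using assms by blast
  then have "\<exists>F. F \<subseteq> E \<and> card F = es_chi V E \<and>
      chromatic_number V (E - F) = chromatic_number V E - 1"
    unfolding es_chi_def by (rule LeastI)
  then show ?thesis using that by blast
qed

lemma crit_3_2_colorable_2_minus_two_edges:
  assumes G: "simple_graph V E" and crit: "crit_3_2 V E" and "e \<in> E"
  obtains f where "colorable V (E - {e, f}) 2"
proof (cases "colorable V (E - {e}) 2")
  case True
  then show ?thesis using that[of e] by simp
next
  case False
  let ?H = "E - {e}"
  have G': "simple_graph V (?H - F)" for F by (rule simple_graph_subset[OF G]) blast
  have chi: "chromatic_number V E = 3" and es: "es_chi V ?H < 2"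
    using crit \<open>e \<in> E\<close> by (auto simp: crit_3_2_def edge_stability_critical_def)
  have chi_H: "chromatic_number V ?H = 3"
    using chromatic_number_mono[OF G, of ?H] chromatic_number_le_iff[OF G'[of "{}"], of 2] False chi
    by simp
  have "?H \<noteq> {}" using False colorable_no_edges[of 2 V] by (metis zero_less_numeral)
  then obtain g where g: "g \<in> ?H" by blast
  then obtain u v where "g = {u, v}" "u \<in> V" "v \<in> V" "u \<noteq> v"
    using G unfolding simple_graph_def by (meson DiffD1)
  with g have uv: "{u, v} \<in> ?H" "u \<in> V" "v \<in> V" "u \<noteq> v" by simp_all
  have "?H - (?H - {{u, v}}) = {{u, v}}" using uv(1) by blast
  then have "chromatic_number V (?H - (?H - {{u, v}})) = chromatic_number V ?H - 1"
    using chi_H chromatic_number_single_edge[OF _ uv(2-4)] G by (simp add: simple_graph_def)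
  then obtain F where F: "F \<subseteq> ?H" "card F = es_chi V ?H"
      "chromatic_number V (?H - F) = chromatic_number V ?H - 1"
    using es_chi_attained[of "?H - {{u, v}}" ?H V] by blast
  have "finite F" using F(1) simple_graph_finite_edges[OF G] finite_subset by blast
  moreover have "F \<noteq> {}" using F(3) chi_H by auto
  ultimately have "card F \<noteq> 0" by simp
  then have "card F = 1" using F(2) es by linarith
  then obtain f where "F = {f}" by (rule card_1_singletonE)
  moreover have "colorable V (?H - F) 2"
    using F(3) chi_H chromatic_number_le_iff[OF G'[of F], of 2] by simp
  moreover have "E - {e, f} = ?H - F" using \<open>F = {f}\<close> by blast
  ultimately show ?thesis using that[of f] by simp
qed

lemma odd_cyclesE:
  assumes "C \<in> odd_cycles V E"
  obtains vs where "C = (set vs, cycle_edges vs)" "distinct vs" "3 \<le> length vs"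
    "odd (length vs)" "set vs \<subseteq> V" "cycle_edges vs \<subseteq> E"
  using assms by (auto simp: odd_cycles_def is_cycle_def)

lemma odd_cycles_edges_subset: "C \<in> odd_cycles V E \<Longrightarrow> snd C \<subseteq> E"
  by (auto simp: odd_cycles_def is_cycle_def)

lemma odd_cycles_edge_disjoint:
  assumes "C1 \<in> odd_cycles V E" "C2 \<in> odd_cycles V E" "card (fst C1 \<inter> fst C2) \<le> 1"
  shows "snd C1 \<inter> snd C2 = {}"
proof -
  obtain vs1 where "C1 = (set vs1, cycle_edges vs1)" "distinct vs1" "3 \<le> length vs1"
    using assms(1) by (rule odd_cyclesE)
  moreover obtain vs2 where "C2 = (set vs2, cycle_edges vs2)" using assms(2) by (rule odd_cyclesE)
  ultimately show ?thesis using cycle_edges_disjoint[of vs1 vs2] assms(3) by simp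
qed

lemma odd_cycles_subset_Un_cases:
  assumes "C \<in> odd_cycles V E" "C1 \<in> odd_cycles V E" "C2 \<in> odd_cycles V E"
    and "snd C \<subseteq> snd C1 \<union> snd C2" "card (fst C1 \<inter> fst C2) \<le> 1"
  shows "snd C \<subseteq> snd C1 \<or> snd C \<subseteq> snd C2"
proof -
  obtain vs where "C = (set vs, cycle_edges vs)" "distinct vs" using assms(1) by (rule odd_cyclesE)
  moreover obtain vs1 where "C1 = (set vs1, cycle_edges vs1)" using assms(2) by (rule odd_cyclesE)
  moreover obtain vs2 where "C2 = (set vs2, cycle_edges vs2)" using assms(3) by (rule odd_cyclesE)
  ultimately show ?thesis
    using cycle_edges_subset_Un_cases[of vs "cycle_edges vs1" "cycle_edges vs2"] assms(4,5)
    by (simp add: Union_cycle_edges)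
qed

lemma odd_cycles_eq_if_edges_subset:
  assumes "C \<in> odd_cycles V E" "C' \<in> odd_cycles V E" "snd C' \<subseteq> snd C"
  shows "C' = C"
proof -
  obtain vs where vs: "C = (set vs, cycle_edges vs)" "distinct vs" "3 \<le> length vs"
    using assms(1) by (rule odd_cyclesE)
  obtain ws where ws: "C' = (set ws, cycle_edges ws)" "distinct ws" "3 \<le> length ws"
    using assms(2) by (rule odd_cyclesE)
  have "cycle_edges ws = cycle_edges vs"
    using cycle_edges_subset_imp_eq[OF vs(2,3) ws(2,3)] assms(3) vs(1) ws(1) by simp
  then show ?thesis using vs(1) ws(1) Union_cycle_edges by metis
qed

lemma crit_3_2_edge_disjoint_odd_cycles_cover:
  assumes "simple_graph V E" "crit_3_2 V E"
    and "C1 \<in> odd_cycles V E" "C2 \<in> odd_cycles V E" "snd C1 \<inter> snd C2 = {}"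
  shows "E \<subseteq> snd C1 \<union> snd C2"
proof
  fix e assume "e \<in> E"
  then obtain f where f: "colorable V (E - {e, f}) 2"
    using crit_3_2_colorable_2_minus_two_edges[OF assms(1,2)] by metis
  have "e \<in> snd C \<or> f \<in> snd C" if C: "C \<in> odd_cycles V E" for C
  proof -
    obtain vs where "C = (set vs, cycle_edges vs)" "distinct vs" "3 \<le> length vs"
      "odd (length vs)" "set vs \<subseteq> V" "cycle_edges vs \<subseteq> E"
      using C by (rule odd_cyclesE)
    then show ?thesis using odd_cycle_not_2_colorable[of vs V "E - {e, f}"] f by auto
  qed
  then show "e \<in> snd C1 \<union> snd C2" using assms(3-5) by blast
qed

theorem lemma2p6:
  fixes V :: "'a set" and E :: "'a set set"
  assumes "simple_graph V E"
    and "crit_3_2 V E"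
    and "\<exists>C1 C2 C3. C1 \<in> odd_cycles V E \<and> C2 \<in> odd_cycles V E \<and> C3 \<in> odd_cycles V E \<and>
           C1 \<noteq> C2 \<and> C1 \<noteq> C3 \<and> C2 \<noteq> C3"
  shows "\<forall>C1\<in>odd_cycles V E. \<forall>C2\<in>odd_cycles V E. C1 \<noteq> C2 \<longrightarrow> card (fst C1 \<inter> fst C2) > 1"
proof (intro ballI impI)
  fix C1 C2 assume C1: "C1 \<in> odd_cycles V E" and C2: "C2 \<in> odd_cycles V E" and "C1 \<noteq> C2"
  obtain C3 where C3: "C3 \<in> odd_cycles V E" "C3 \<noteq> C1" "C3 \<noteq> C2" using assms(3) by blast
  show "card (fst C1 \<inter> fst C2) > 1"
  proof (rule ccontr)
    assume "\<not> card (fst C1 \<inter> fst C2) > 1"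
    then have few: "card (fst C1 \<inter> fst C2) \<le> 1" by simp
    have "E \<subseteq> snd C1 \<union> snd C2"
      using crit_3_2_edge_disjoint_odd_cycles_cover[OF assms(1,2) C1 C2]
        odd_cycles_edge_disjoint[OF C1 C2 few] by blast
    then have "snd C3 \<subseteq> snd C1 \<or> snd C3 \<subseteq> snd C2"
      using odd_cycles_subset_Un_cases[OF C3(1) C1 C2 _ few] odd_cycles_edges_subset[OF C3(1)]
      by blast
    then show False using odd_cycles_eq_if_edges_subset C1 C2 C3 by blast
  qed
qed

end
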